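(* Suppose $T$ has the f.s. dichotomy, $M\preceq\mathbb{C}$ is small, and $\langle A_i:i\in I\rangle$ is an $M$-f.s. sequence. Then for every $c\in\mathbb{C}$ there is a simple extension $\langle A'_j:j\in J\rangle$ of $\langle A_i:i\in I\rangle$ which is an $M$-f.s. sequence and has $c\in\bigcup_jA'_j$. Moreover, if $(I,\le)$ is a well-ordering with a maximum element, one may take $J=I$.
   Context: Work in a monster model $\mathbb{C}$ of $T$. For $B\supseteq M$, $\mathrm{tp}(A/B)$ is finitely satisfied in $M$ if each of its formulas is satisfied by a tuple from $M$. $T$ has the f.s. dichotomy if for every small model $M$ and finite tuples $\bar a,\bar b$ with $\mathrm{tp}(\bar b/M\bar a)$ finitely satisfied in $M$, for every singleton $c$ either $\mathrm{tp}(\bar b/M\bar ac)$ or $\mathrm{tp}(\bar bc/M\bar a)$ is finitely satisfied in $M$. For a sequence of sets $\langle A_i:i\in I\rangle$, $A_{<i}=\bigcup_{j<i}A_j$. An $M$-f.s. sequence is a sequence of sets $\langle A_i:i\in I\rangle$ such that $\mathrm{tp}(A_i/A_{<i}M)$ is finitely satisfied in $M$ for every $i$. A sequence $\langle A'_j:j\in J\rangle$ is a simple extension of $\langle A_i:i\in I\rangle$ if $I\subseteq J$ and $A_i\subseteq A'_i$ for all $i\in I$ (i.e. $\langle A_i\rangle$ is obtained from it by passing to a subsequence and shrinking the sets). *)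

theory Defs
  imports Main
begin

datatype 'r fm = Eq nat nat | Rel 'r "nat list" | Neg "'r fm" | Conj "'r fm" "'r fm" | Ex nat "'r fm"

primrec sat_in :: "'a set \<Rightarrow> ('r \<Rightarrow> 'a list set) \<Rightarrow> (nat \<Rightarrow> 'a) \<Rightarrow> 'r fm \<Rightarrow> bool" where
  "sat_in S Irel e (Eq x y) = (e x = e y)"
| "sat_in S Irel e (Rel r xs) = (map e xs \<in> Irel r)"
| "sat_in S Irel e (Neg \<phi>) = (\<not> sat_in S Irel e \<phi>)"
| "sat_in S Irel e (Conj \<phi> \<psi>) = (sat_in S Irel e \<phi> \<and> sat_in S Irel e \<psi>)"
| "sat_in S Irel e (Ex n \<phi>) = (\<exists>a\<in>S. sat_in S Irel (e(n := a)) \<phi>)"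

text \<open>The monster model has universe UNIV :: 'a set.\<close>

abbreviation sat :: "('r \<Rightarrow> 'a list set) \<Rightarrow> (nat \<Rightarrow> 'a) \<Rightarrow> 'r fm \<Rightarrow> bool" where
  "sat Irel e \<phi> \<equiv> sat_in UNIV Irel e \<phi>"

definition elem_sub :: "('r \<Rightarrow> 'a list set) \<Rightarrow> 'a set \<Rightarrow> bool" where
  "elem_sub Irel M \<longleftrightarrow> M \<noteq> {} \<and>
     (\<forall>\<phi> e. (\<forall>v. e v \<in> M) \<longrightarrow> (sat_in M Irel e \<phi> \<longleftrightarrow> sat Irel e \<phi>))"

definition small :: "'k set \<Rightarrow> 'a set \<Rightarrow> bool" where
  "small K X \<longleftrightarrow> (card_of X, card_of K) \<in> ordLess"

text \<open>|K|-saturation: every finitely satisfiable set of formulas in variable 0 with parameters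
  from a small set B is realized.\<close>

definition saturated :: "('r \<Rightarrow> 'a list set) \<Rightarrow> 'k set \<Rightarrow> bool" where
  "saturated Irel K \<longleftrightarrow>
    (\<forall>(B::'a set) (p::('r fm \<times> (nat \<Rightarrow> 'a)) set).
       small K B \<and> (\<forall>(\<phi>, e)\<in>p. \<forall>v. v \<noteq> 0 \<longrightarrow> e v \<in> B) \<and>
       (\<forall>q. finite q \<and> q \<subseteq> p \<longrightarrow> (\<exists>a. \<forall>(\<phi>, e)\<in>q. sat Irel (e(0 := a)) \<phi>))
       \<longrightarrow> (\<exists>a. \<forall>(\<phi>, e)\<in>p. sat Irel (e(0 := a)) \<phi>))"

definition homogeneous :: "('r \<Rightarrow> 'a list set) \<Rightarrow> 'k set \<Rightarrow> bool" where
  "homogeneous Irel K \<longleftrightarrow>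
    (\<forall>(D::'a set) (f::'a \<Rightarrow> 'a).
       small K D \<and> (\<forall>\<phi> e. (\<forall>v. e v \<in> D) \<longrightarrow> (sat Irel e \<phi> \<longleftrightarrow> sat Irel (f \<circ> e) \<phi>))
       \<longrightarrow> (\<exists>\<sigma>. bij \<sigma> \<and> (\<forall>r xs. xs \<in> Irel r \<longleftrightarrow> map \<sigma> xs \<in> Irel r) \<and> (\<forall>d\<in>D. \<sigma> d = f d)))"

definition monster :: "('r \<Rightarrow> 'a list set) \<Rightarrow> 'k set \<Rightarrow> bool" where
  "monster Irel K \<longleftrightarrow> infinite K \<and> (card_of (UNIV :: 'r fm set), card_of K) \<in> ordLess \<and>
     saturated Irel K \<and> homogeneous Irel K"

text \<open>tp(A/B) is finitely satisfied in M: whenever a formula holds of a finite tuple from A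
  (variables xs) with parameters from B (all other variables), it holds of some tuple from M
  with the same parameters.\<close>

definition fs :: "('r \<Rightarrow> 'a list set) \<Rightarrow> 'a set \<Rightarrow> 'a set \<Rightarrow> 'a set \<Rightarrow> bool" where
  "fs Irel A B M \<longleftrightarrow>
    (\<forall>\<phi> (xs::nat list) e. (\<forall>v\<in>set xs. e v \<in> A) \<and> (\<forall>v. v \<notin> set xs \<longrightarrow> e v \<in> B) \<and> sat Irel e \<phi>
       \<longrightarrow> (\<exists>e'. (\<forall>v\<in>set xs. e' v \<in> M) \<and> (\<forall>v. v \<notin> set xs \<longrightarrow> e' v = e v) \<and> sat Irel e' \<phi>))"

definition fs_dichotomy :: "('r \<Rightarrow> 'a list set) \<Rightarrow> 'k set \<Rightarrow> bool" where
  "fs_dichotomy Irel K \<longleftrightarrow>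
    (\<forall>M (as::'a list) (bs::'a list) (c::'a).
       elem_sub Irel M \<and> small K M \<and> fs Irel (set bs) (M \<union> set as) M
       \<longrightarrow> fs Irel (set bs) (M \<union> set as \<union> {c}) M \<or> fs Irel (set bs \<union> {c}) (M \<union> set as) M)"

definition strict_linear_on :: "'i set \<Rightarrow> ('i \<Rightarrow> 'i \<Rightarrow> bool) \<Rightarrow> bool" where
  "strict_linear_on I lt \<longleftrightarrow> (\<forall>i\<in>I. \<not> lt i i) \<and>
     (\<forall>i\<in>I. \<forall>j\<in>I. \<forall>k\<in>I. lt i j \<and> lt j k \<longrightarrow> lt i k) \<and>
     (\<forall>i\<in>I. \<forall>j\<in>I. lt i j \<or> i = j \<or> lt j i)"

definition well_order_with_max :: "'i set \<Rightarrow> ('i \<Rightarrow> 'i \<Rightarrow> bool) \<Rightarrow> bool" where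
  "well_order_with_max I lt \<longleftrightarrow>
     (\<forall>S. S \<subseteq> I \<and> S \<noteq> {} \<longrightarrow> (\<exists>m\<in>S. \<forall>s\<in>S. \<not> lt s m)) \<and>
     (\<exists>m\<in>I. \<forall>i\<in>I. i \<noteq> m \<longrightarrow> lt i m)"

definition below :: "'i set \<Rightarrow> ('i \<Rightarrow> 'i \<Rightarrow> bool) \<Rightarrow> ('i \<Rightarrow> 'a set) \<Rightarrow> 'i \<Rightarrow> 'a set" where
  "below I lt A i = \<Union> (A ` {j\<in>I. lt j i})"

definition fs_seq :: "('r \<Rightarrow> 'a list set) \<Rightarrow> 'a set \<Rightarrow> 'i set \<Rightarrow> ('i \<Rightarrow> 'i \<Rightarrow> bool) \<Rightarrow> ('i \<Rightarrow> 'a set) \<Rightarrow> bool" where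
  "fs_seq Irel M I lt A \<longleftrightarrow> (\<forall>i\<in>I. fs Irel (A i) (below I lt A i \<union> M) M)"

end

theory Submission
  imports Defs
begin

text \<open>Let S be the set of indices i for which adding c to the parameters destroys finite
  satisfiability of tp(A_i / A_{<i} M). By the dichotomy, extended from finite tuples to sets by
  finite character, tp(A_i c / A_{<i} M) is finitely satisfied for every i in S. If S has a largest
  element, c is added to that A_i. Otherwise let D be the initial segment below S: tp(c / A_D M) is
  finitely satisfied, being so over each A_{<i} with i in S, and c is placed as a new singleton at
  the cut after D. If I is well ordered with a maximum, I - D is nonempty and c can instead be added
  to A_i for the least i outside D, since finite satisfiability is transitive.\<close>

primrec fvars :: "'r fm \<Rightarrow> nat set" where
  "fvars (Eq x y) = {x, y}"
| "fvars (Rel r xs) = set xs"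
| "fvars (Neg \<phi>) = fvars \<phi>"
| "fvars (Conj \<phi> \<psi>) = fvars \<phi> \<union> fvars \<psi>"
| "fvars (Ex n \<phi>) = fvars \<phi> - {n}"

lemma finite_fvars: "finite (fvars \<phi>)"
  by (induct \<phi>) auto

lemma sat_in_cong:
  assumes "\<And>v. v \<in> fvars \<phi> \<Longrightarrow> e v = e' v"
  shows "sat_in S R e \<phi> = sat_in S R e' \<phi>"
  using assms
proof (induct \<phi> arbitrary: e e')
  case (Rel r xs)
  then have "map e xs = map e' xs" by (simp add: map_eq_conv)
  then show ?case by (simp only: sat_in.simps)
next
  case (Ex n \<phi>)
  have "sat_in S R (e(n := a)) \<phi> = sat_in S R (e'(n := a)) \<phi>" for a
    by (rule Ex.hyps) (use Ex.prems in auto)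
  then show ?case by simp
next
  case (Neg \<phi>)
  have "sat_in S R e \<phi> = sat_in S R e' \<phi>" by (rule Neg.hyps) (use Neg.prems in simp)
  then show ?case by simp
next
  case (Conj \<phi> \<psi>)
  have "sat_in S R e \<phi> = sat_in S R e' \<phi>" by (rule Conj.hyps(1)) (use Conj.prems in simp)
  moreover have "sat_in S R e \<psi> = sat_in S R e' \<psi>" by (rule Conj.hyps(2)) (use Conj.prems in simp)
  ultimately show ?case by simp
qed simp

primrec Ex_list :: "nat list \<Rightarrow> 'r fm \<Rightarrow> 'r fm" where
  "Ex_list [] \<phi> = \<phi>"
| "Ex_list (x # xs) \<phi> = Ex x (Ex_list xs \<phi>)"

lemma sat_in_Ex_list:
  "sat_in S R e (Ex_list xs \<phi>) \<longleftrightarrow>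
    (\<exists>e'. (\<forall>v\<in>set xs. e' v \<in> S) \<and> (\<forall>v. v \<notin> set xs \<longrightarrow> e' v = e v) \<and> sat_in S R e' \<phi>)"
proof (induct xs arbitrary: e)
  case Nil
  have "(\<forall>v. e' v = e v) \<longleftrightarrow> e' = e" for e' :: "nat \<Rightarrow> 'a" by auto
  then show ?case by simp
next
  case (Cons x xs)
  show ?case
  proof
    assume "sat_in S R e (Ex_list (x # xs) \<phi>)"
    then obtain a where "a \<in> S" "sat_in S R (e(x := a)) (Ex_list xs \<phi>)" by auto
    with Cons.hyps obtain e' where
      "\<forall>v\<in>set xs. e' v \<in> S" "\<forall>v. v \<notin> set xs \<longrightarrow> e' v = (e(x := a)) v" "sat_in S R e' \<phi>"
      by blast
    moreover have "\<forall>v\<in>set (x # xs). e' v \<in> S"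
      using calculation(1,2) \<open>a \<in> S\<close> by (metis fun_upd_same set_ConsD)
    moreover have "\<forall>v. v \<notin> set (x # xs) \<longrightarrow> e' v = e v"
      using calculation(2) by simp
    ultimately show "\<exists>e'. (\<forall>v\<in>set (x # xs). e' v \<in> S) \<and>
        (\<forall>v. v \<notin> set (x # xs) \<longrightarrow> e' v = e v) \<and> sat_in S R e' \<phi>"
      by blast
  next
    assume "\<exists>e'. (\<forall>v\<in>set (x # xs). e' v \<in> S) \<and>
        (\<forall>v. v \<notin> set (x # xs) \<longrightarrow> e' v = e v) \<and> sat_in S R e' \<phi>"
    then obtain e' where e': "\<forall>v\<in>set (x # xs). e' v \<in> S"
        "\<forall>v. v \<notin> set (x # xs) \<longrightarrow> e' v = e v" "sat_in S R e' \<phi>"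
      by blast
    have "\<forall>v\<in>set xs. e' v \<in> S" using e'(1) by simp
    moreover have "\<forall>v. v \<notin> set xs \<longrightarrow> e' v = (e(x := e' x)) v" using e'(2) by simp
    ultimately have "sat_in S R (e(x := e' x)) (Ex_list xs \<phi>)"
      unfolding Cons.hyps using e'(3) by blast
    then show "sat_in S R e (Ex_list (x # xs) \<phi>)" using e'(1) by auto
  qed
qed

lemma fsI:
  assumes "\<And>\<phi> xs e. \<forall>v\<in>set xs. e v \<in> A \<Longrightarrow> \<forall>v. v \<notin> set xs \<longrightarrow> e v \<in> B \<Longrightarrow> sat R e \<phi> \<Longrightarrow>
     \<exists>e'. (\<forall>v\<in>set xs. e' v \<in> M) \<and> (\<forall>v. v \<notin> set xs \<longrightarrow> e' v = e v) \<and> sat R e' \<phi>"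
  shows "fs R A B M"
  unfolding fs_def using assms by blast

lemma fsE:
  assumes "fs R A B M" "\<forall>v\<in>set xs. e v \<in> A" "\<forall>v. v \<notin> set xs \<longrightarrow> e v \<in> B" "sat R e \<phi>"
  obtains e' where "\<forall>v\<in>set xs. e' v \<in> M" "\<forall>v. v \<notin> set xs \<longrightarrow> e' v = e v" "sat R e' \<phi>"
  using assms(1)[unfolded fs_def, rule_format, of xs e \<phi>] assms(2-4) that by blast

lemma fs_mono:
  assumes "fs R A B M" "A' \<subseteq> A" "B' \<subseteq> B"
  shows "fs R A' B' M"
proof (rule fsI)
  fix \<phi> xs e
  assume "\<forall>v\<in>set xs. e v \<in> A'" "\<forall>v. v \<notin> set xs \<longrightarrow> e v \<in> B'" "sat R e \<phi>"
  with assms obtain e' where "\<forall>v\<in>set xs. e' v \<in> M" "\<forall>v. v \<notin> set xs \<longrightarrow> e' v = e v" "sat R e' \<phi>"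
    by (elim fsE) auto
  then show "\<exists>e'. (\<forall>v\<in>set xs. e' v \<in> M) \<and> (\<forall>v. v \<notin> set xs \<longrightarrow> e' v = e v) \<and> sat R e' \<phi>"
    by blast
qed

lemma fs_finite_character:
  assumes "M \<noteq> {}" "M \<subseteq> B"
    and fin: "\<And>A0 B0. finite A0 \<Longrightarrow> A0 \<subseteq> A \<Longrightarrow> finite B0 \<Longrightarrow> B0 \<subseteq> B \<Longrightarrow> fs R A0 (M \<union> B0) M"
  shows "fs R A B M"
proof (rule fsI)
  fix \<phi> xs e
  assume xsA: "\<forall>v\<in>set xs. e v \<in> A" and restB: "\<forall>v. v \<notin> set xs \<longrightarrow> e v \<in> B" and "sat R e \<phi>"
  obtain m where "m \<in> M" using assms(1) by blast
  define A0 where "A0 = e ` set xs"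
  define B0 where "B0 = e ` (fvars \<phi> - set xs)"
  \<comment> \<open>moving the variables that do not occur in \<phi> into M leaves only finitely many parameters\<close>
  define e0 where "e0 = (\<lambda>v. if v \<in> set xs \<or> v \<in> fvars \<phi> then e v else m)"
  have "fs R A0 (M \<union> B0) M"
    using xsA restB by (intro fin) (auto simp: A0_def B0_def finite_fvars)
  moreover have "sat R e0 \<phi>"
    using \<open>sat R e \<phi>\<close> sat_in_cong[of \<phi> e0 e] by (simp add: e0_def)
  moreover have "\<forall>v\<in>set xs. e0 v \<in> A0" "\<forall>v. v \<notin> set xs \<longrightarrow> e0 v \<in> M \<union> B0"
    using \<open>m \<in> M\<close> by (auto simp: e0_def A0_def B0_def)
  ultimately obtain e' where e': "\<forall>v\<in>set xs. e' v \<in> M" "\<forall>v. v \<notin> set xs \<longrightarrow> e' v = e0 v"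
      "sat R e' \<phi>"
    by (elim fsE)
  define e'' where "e'' = (\<lambda>v. if v \<in> set xs then e' v else e v)"
  have "sat R e'' \<phi>"
    using e'(2,3) sat_in_cong[of \<phi> e'' e'] by (simp add: e''_def e0_def)
  then show "\<exists>e'. (\<forall>v\<in>set xs. e' v \<in> M) \<and> (\<forall>v. v \<notin> set xs \<longrightarrow> e' v = e v) \<and> sat R e' \<phi>"
    using e'(1) by (intro exI[of _ e'']) (simp add: e''_def)
qed

text \<open>Quantify away the variables to be realised and use elementarity of M.\<close>

lemma fs_over_model:
  assumes "elem_sub R M"
  shows "fs R X M M"
proof (rule fsI)
  fix \<phi> xs e
  assume "\<forall>v. v \<notin> set xs \<longrightarrow> e v \<in> M" and "sat R e \<phi>"
  have "M \<noteq> {}" and elem: "\<And>\<psi> e. \<forall>v. e v \<in> M \<Longrightarrow> sat_in M R e \<psi> = sat R e \<psi>"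
    using assms unfolding elem_sub_def by blast+
  then obtain m where "m \<in> M" by blast
  define e0 where "e0 = (\<lambda>v. if v \<in> set xs then m else e v)"
  have e0M: "\<forall>v. e0 v \<in> M"
    using \<open>m \<in> M\<close> \<open>\<forall>v. v \<notin> set xs \<longrightarrow> e v \<in> M\<close> by (simp add: e0_def)
  have "sat R e0 (Ex_list xs \<phi>)"
    unfolding sat_in_Ex_list using \<open>sat R e \<phi>\<close> by (intro exI[of _ e]) (simp add: e0_def)
  then have "sat_in M R e0 (Ex_list xs \<phi>)" using elem[OF e0M] by blast
  then obtain e' where e': "\<forall>v\<in>set xs. e' v \<in> M" "\<forall>v. v \<notin> set xs \<longrightarrow> e' v = e0 v"
      "sat_in M R e' \<phi>"
    unfolding sat_in_Ex_list by blast
  then have "\<forall>v. e' v \<in> M" using e0M by metis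
  with e' elem show "\<exists>e'. (\<forall>v\<in>set xs. e' v \<in> M) \<and> (\<forall>v. v \<notin> set xs \<longrightarrow> e' v = e v) \<and> sat R e' \<phi>"
    by (intro exI[of _ e']) (simp add: e0_def)
qed

text \<open>Realise the variables with values in X first, over B \<union> C; the remaining ones, with values
  in C, are then realised over B.\<close>

lemma fs_Un:
  assumes "M \<subseteq> B" "fs R C B M" "fs R X (B \<union> C) M"
  shows "fs R (X \<union> C) B M"
proof (rule fsI)
  fix \<phi> xs e
  assume xs: "\<forall>v\<in>set xs. e v \<in> X \<union> C" and rest: "\<forall>v. v \<notin> set xs \<longrightarrow> e v \<in> B"
    and "sat R e \<phi>"
  define xa where "xa = filter (\<lambda>v. e v \<in> X) xs"
  define xc where "xc = filter (\<lambda>v. e v \<notin> X) xs"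
  have "\<forall>v\<in>set xa. e v \<in> X" "\<forall>v. v \<notin> set xa \<longrightarrow> e v \<in> B \<union> C"
    using xs rest by (auto simp: xa_def)
  with assms(3) \<open>sat R e \<phi>\<close> obtain e1 where e1: "\<forall>v\<in>set xa. e1 v \<in> M"
      "\<forall>v. v \<notin> set xa \<longrightarrow> e1 v = e v" "sat R e1 \<phi>"
    by (elim fsE)
  have "\<forall>v\<in>set xc. e1 v \<in> C"
    using xs e1(2) by (auto simp: xa_def xc_def)
  moreover have "\<forall>v. v \<notin> set xc \<longrightarrow> e1 v \<in> B"
  proof (intro allI impI)
    fix v assume "v \<notin> set xc"
    show "e1 v \<in> B"
    proof (cases "v \<in> set xa")
      case True
      then show ?thesis using e1(1) assms(1) by blast
    next
      case False
      then show ?thesis using \<open>v \<notin> set xc\<close> rest e1(2) by (auto simp: xa_def xc_def)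
    qed
  qed
  ultimately obtain e2 where e2: "\<forall>v\<in>set xc. e2 v \<in> M"
      "\<forall>v. v \<notin> set xc \<longrightarrow> e2 v = e1 v" "sat R e2 \<phi>"
    using assms(2) e1(3) by (elim fsE)
  have "\<forall>v\<in>set xs. e2 v \<in> M" "\<forall>v. v \<notin> set xs \<longrightarrow> e2 v = e v"
    using e1(1,2) e2(1,2) by (auto simp: xa_def xc_def)
  with e2(3) show "\<exists>e'. (\<forall>v\<in>set xs. e' v \<in> M) \<and> (\<forall>v. v \<notin> set xs \<longrightarrow> e' v = e v) \<and> sat R e' \<phi>"
    by blast
qed

lemma fs_Union_chain:
  assumes "elem_sub R M" "subset.chain UNIV \<B>" "\<forall>B\<in>\<B>. fs R X (B \<union> M) M"
  shows "fs R X (\<Union>\<B> \<union> M) M"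
proof (rule fs_finite_character)
  show "M \<noteq> {}" using assms(1) unfolding elem_sub_def by blast
next
  fix A0 B0 assume "finite A0" "A0 \<subseteq> X" "finite B0" "B0 \<subseteq> \<Union>\<B> \<union> M"
  show "fs R A0 (M \<union> B0) M"
  proof (cases "\<B> = {}")
    case True
    with \<open>B0 \<subseteq> \<Union>\<B> \<union> M\<close> have "M \<union> B0 \<subseteq> M" by simp
    then show ?thesis by (intro fs_mono[OF fs_over_model[OF assms(1)], of _ A0]) simp_all
  next
    case False
    obtain B where "B \<in> \<B>" "B0 - M \<subseteq> B"
      using finite_subset_Union_chain[OF _ _ False assms(2), of "B0 - M"]
        \<open>finite B0\<close> \<open>B0 \<subseteq> \<Union>\<B> \<union> M\<close> by blast
    with assms(3) \<open>A0 \<subseteq> X\<close> show ?thesis by (blast intro: fs_mono)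
  qed
qed simp

lemma fs_dichotomy_finite:
  assumes "fs_dichotomy R K" "elem_sub R M" "small K M" "finite A" "finite B"
    "fs R A (M \<union> B) M"
  shows "fs R A (M \<union> B \<union> {c}) M \<or> fs R (A \<union> {c}) (M \<union> B) M"
proof -
  obtain bs as where "set bs = A" "set as = B"
    using \<open>finite A\<close> \<open>finite B\<close> finite_list by metis
  with assms(1,2,3,6) show ?thesis unfolding fs_dichotomy_def by blast
qed

text \<open>A failure of finite satisfiability over the parameters with c added is witnessed by finite
  sets; applying the dichotomy to these witnesses enlarged by arbitrary finite pieces rules out its
  first alternative every time.\<close>

lemma fs_dichotomy_sets:
  assumes "fs_dichotomy R K" "elem_sub R M" "small K M"
    and fsX: "fs R X (B \<union> M) M" and not_fs: "\<not> fs R X (B \<union> M \<union> {c}) M"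
  shows "fs R (X \<union> {c}) (B \<union> M) M"
proof -
  have "M \<noteq> {}" using assms(2) unfolding elem_sub_def by blast
  obtain A0 B0 where A0: "finite A0" "A0 \<subseteq> X" and B0: "finite B0" "B0 \<subseteq> B \<union> M"
    and not_fs0: "\<not> fs R A0 (M \<union> B0 \<union> {c}) M"
  proof -
    obtain A0 B0 where "finite A0" "A0 \<subseteq> X" "finite B0" "B0 \<subseteq> B \<union> M \<union> {c}"
        "\<not> fs R A0 (M \<union> B0) M"
      using fs_finite_character[OF \<open>M \<noteq> {}\<close>, of "B \<union> M \<union> {c}" X R] not_fs by blast
    moreover have "M \<union> B0 \<subseteq> M \<union> (B0 - {c}) \<union> {c}" by blast
    ultimately show thesis using that[of A0 "B0 - {c}"] fs_mono by blast
  qed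
  show ?thesis
  proof (rule fs_finite_character[OF \<open>M \<noteq> {}\<close>])
    fix A1 B1 assume A1: "finite A1" "A1 \<subseteq> X \<union> {c}" and B1: "finite B1" "B1 \<subseteq> B \<union> M"
    let ?A = "A0 \<union> (A1 - {c})" and ?B = "B0 \<union> B1"
    have "fs R ?A (M \<union> ?B) M"
      using fsX by (rule fs_mono) (use A0 A1 B0 B1 in auto)
    then have "fs R ?A (M \<union> ?B \<union> {c}) M \<or> fs R (?A \<union> {c}) (M \<union> ?B) M"
      using A0 A1 B0 B1 by (intro fs_dichotomy_finite[OF assms(1-3)]) auto
    moreover have "\<not> fs R ?A (M \<union> ?B \<union> {c}) M"
      using not_fs0 fs_mono[of R ?A "M \<union> ?B \<union> {c}" M A0 "M \<union> B0 \<union> {c}"] by blast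
    ultimately have "fs R (?A \<union> {c}) (M \<union> ?B) M" by blast
    then show "fs R A1 (M \<union> B1) M" by (rule fs_mono) auto
  qed blast
qed

lemma strict_linear_onD:
  assumes "strict_linear_on I lt"
  shows "\<And>i. i \<in> I \<Longrightarrow> \<not> lt i i"
    and "\<And>i j k. i \<in> I \<Longrightarrow> j \<in> I \<Longrightarrow> k \<in> I \<Longrightarrow> lt i j \<Longrightarrow> lt j k \<Longrightarrow> lt i k"
    and "\<And>i j. i \<in> I \<Longrightarrow> j \<in> I \<Longrightarrow> lt i j \<or> i = j \<or> lt j i"
  using assms unfolding strict_linear_on_def by blast+

lemma fs_seqD: "fs_seq R M I lt A \<Longrightarrow> i \<in> I \<Longrightarrow> fs R (A i) (below I lt A i \<union> M) M"
  unfolding fs_seq_def by blast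

lemma subset_chain_below:
  assumes slo: "strict_linear_on I lt" and "S \<subseteq> I"
  shows "subset.chain UNIV (below I lt A ` S)"
  unfolding subset_chain_def
proof (intro conjI ballI)
  have mono: "below I lt A s \<subseteq> below I lt A s'" if "s \<in> I" "s' \<in> I" "lt s s'" for s s'
    using that strict_linear_onD(2)[OF slo] unfolding below_def by blast
  fix X Y assume "X \<in> below I lt A ` S" "Y \<in> below I lt A ` S"
  then obtain s s' where "s \<in> I" "s' \<in> I" "X = below I lt A s" "Y = below I lt A s'"
    using \<open>S \<subseteq> I\<close> by blast
  then show "X \<subseteq> Y \<or> Y \<subseteq> X"
    using mono strict_linear_onD(3)[OF slo \<open>s \<in> I\<close> \<open>s' \<in> I\<close>] by blast
qed simp

lemma fs_seq_add_at:
  assumes slo: "strict_linear_on I lt" and seq: "fs_seq R M I lt A" and "i1 \<in> I"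
    and at: "fs R (A i1 \<union> {c}) (below I lt A i1 \<union> M) M"
    and above: "\<forall>i\<in>I. lt i1 i \<longrightarrow> fs R (A i) (below I lt A i \<union> M \<union> {c}) M"
  shows "fs_seq R M I lt (A(i1 := A i1 \<union> {c}))"
  unfolding fs_seq_def
proof
  fix i assume "i \<in> I"
  have below_upd: "below I lt (A(i1 := A i1 \<union> {c})) i =
      (if lt i1 i then below I lt A i \<union> {c} else below I lt A i)"
    using \<open>i1 \<in> I\<close> unfolding below_def by auto
  consider "lt i1 i" | "i = i1" | "lt i i1"
    using strict_linear_onD(3)[OF slo \<open>i1 \<in> I\<close> \<open>i \<in> I\<close>] by blast
  then show "fs R ((A(i1 := A i1 \<union> {c})) i) (below I lt (A(i1 := A i1 \<union> {c})) i \<union> M) M"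
  proof cases
    case 1
    with \<open>i \<in> I\<close> strict_linear_onD(1)[OF slo] have "i \<noteq> i1" by blast
    with 1 \<open>i \<in> I\<close> above show ?thesis
      unfolding below_upd by (auto elim: fs_mono)
  next
    case 2
    with at \<open>i1 \<in> I\<close> strict_linear_onD(1)[OF slo] show ?thesis
      unfolding below_upd by simp
  next
    case 3
    with \<open>i \<in> I\<close> \<open>i1 \<in> I\<close> strict_linear_onD(1,2)[OF slo] have "i \<noteq> i1" "\<not> lt i1 i"
      by blast+
    with fs_seqD[OF seq \<open>i \<in> I\<close>] show ?thesis
      unfolding below_upd by simp
  qed
qed

lemma strict_linear_on_Some:
  assumes "strict_linear_on I lt"
  shows "strict_linear_on (Some ` I) (\<lambda>x y. lt (the x) (the y))"
  unfolding strict_linear_on_def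
proof (intro conjI ballI impI)
  fix x assume "x \<in> Some ` I"
  then show "\<not> lt (the x) (the x)" using strict_linear_onD(1)[OF assms] by auto
next
  fix x y z assume "x \<in> Some ` I" "y \<in> Some ` I" "z \<in> Some ` I"
    and "lt (the x) (the y) \<and> lt (the y) (the z)"
  then obtain i j k where "i \<in> I" "j \<in> I" "k \<in> I" "x = Some i" "z = Some k"
    "lt i j" "lt j k"
    by auto
  then show "lt (the x) (the z)" using strict_linear_onD(2)[OF assms, of i j k] by simp
next
  fix x y assume "x \<in> Some ` I" "y \<in> Some ` I"
  then obtain i j where "i \<in> I" "j \<in> I" "x = Some i" "y = Some j" by blast
  then show "lt (the x) (the y) \<or> x = y \<or> lt (the y) (the x)"
    using strict_linear_onD(3)[OF assms] by auto
qed

lemma below_Some: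
  "below (Some ` I) (\<lambda>x y. lt (the x) (the y)) (\<lambda>x. A (the x)) (Some i) = below I lt A i"
proof -
  have "{x \<in> Some ` I. lt (the x) (the (Some i))} = Some ` {j \<in> I. lt j i}" by auto
  then show ?thesis unfolding below_def by (simp add: image_image)
qed

lemma fs_seq_Some:
  "fs_seq R M I lt A \<Longrightarrow> fs_seq R M (Some ` I) (\<lambda>x y. lt (the x) (the y)) (\<lambda>x. A (the x))"
  unfolding fs_seq_def by (simp add: below_Some)

text \<open>The index None is inserted just above the initial segment D.\<close>

fun cut_lt :: "('i \<Rightarrow> 'i \<Rightarrow> bool) \<Rightarrow> 'i set \<Rightarrow> 'i option \<Rightarrow> 'i option \<Rightarrow> bool" where
  "cut_lt lt D (Some i) (Some j) = lt i j"
| "cut_lt lt D (Some i) None = (i \<in> D)"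
| "cut_lt lt D None (Some j) = (j \<notin> D)"
| "cut_lt lt D None None = False"

lemma strict_linear_on_cut_lt:
  assumes slo: "strict_linear_on I lt" and "D \<subseteq> I"
    and down: "\<forall>j\<in>I. \<forall>k\<in>D. lt j k \<longrightarrow> j \<in> D"
  shows "strict_linear_on (insert None (Some ` I)) (cut_lt lt D)"
  unfolding strict_linear_on_def
proof (intro conjI ballI impI)
  fix x assume "x \<in> insert None (Some ` I)"
  then show "\<not> cut_lt lt D x x" using strict_linear_onD(1)[OF slo] by auto
next
  fix x y z assume "x \<in> insert None (Some ` I)" "y \<in> insert None (Some ` I)"
    "z \<in> insert None (Some ` I)" and "cut_lt lt D x y \<and> cut_lt lt D y z"
  note xyz = this
  note L = strict_linear_onD[OF slo]
  show "cut_lt lt D x z"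
  proof (cases x)
    case None
    then show ?thesis using xyz down by (cases y; cases z) (auto dest: L(2))
  next
    case (Some i)
    then show ?thesis using xyz down \<open>D \<subseteq> I\<close>
      by (cases y; cases z) (auto dest: L(2), metis L(3))
  qed
next
  fix x y assume "x \<in> insert None (Some ` I)" "y \<in> insert None (Some ` I)"
  then show "cut_lt lt D x y \<or> x = y \<or> cut_lt lt D y x"
    using strict_linear_onD(3)[OF slo] by (cases x; cases y) auto
qed

lemma fs_seq_cut:
  assumes seq: "fs_seq R M I lt A" and "D \<subseteq> I"
    and at_cut: "fs R {c} (\<Union>(A ` D) \<union> M) M"
    and above: "\<forall>i\<in>I - D. fs R (A i) (below I lt A i \<union> M \<union> {c}) M"
  shows "fs_seq R M (insert None (Some ` I)) (cut_lt lt D) (case_option {c} A)"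
  unfolding fs_seq_def
proof
  fix x assume x: "x \<in> insert None (Some ` I)"
  let ?J = "insert None (Some ` I)" and ?A' = "case_option {c} A"
  show "fs R (?A' x) (below ?J (cut_lt lt D) ?A' x \<union> M) M"
  proof (cases x)
    case None
    have "{x \<in> ?J. cut_lt lt D x None} = Some ` D"
      using \<open>D \<subseteq> I\<close> by (auto elim: cut_lt.elims)
    then have "below ?J (cut_lt lt D) ?A' None = \<Union>(A ` D)"
      unfolding below_def by (simp add: image_image)
    with None at_cut show ?thesis by simp
  next
    case (Some i)
    with x have "i \<in> I" by auto
    have below_i: "below ?J (cut_lt lt D) ?A' (Some i) =
        (if i \<in> D then below I lt A i else below I lt A i \<union> {c})"
    proof -
      have "{x \<in> ?J. cut_lt lt D x (Some i)} =
          (if i \<in> D then {} else {None}) \<union> Some ` {j \<in> I. lt j i}"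
        by (auto elim: cut_lt.elims)
      then show ?thesis unfolding below_def by (simp add: image_image)
    qed
    show ?thesis
    proof (cases "i \<in> D")
      case True
      with Some fs_seqD[OF seq \<open>i \<in> I\<close>] show ?thesis by (simp add: below_i)
    next
      case False
      with Some above \<open>i \<in> I\<close> show ?thesis by (simp add: below_i Un_ac)
    qed
  qed
qed

definition lower_cut :: "'i set \<Rightarrow> ('i \<Rightarrow> 'i \<Rightarrow> bool) \<Rightarrow> 'i set \<Rightarrow> 'i set" where
  "lower_cut I lt S = {j\<in>I. \<exists>s\<in>S. lt j s}"

lemma lower_cut_subset: "lower_cut I lt S \<subseteq> I"
  by (simp add: lower_cut_def)

lemma lower_cut_downward_closed:
  assumes "strict_linear_on I lt" "S \<subseteq> I"
  shows "\<forall>j\<in>I. \<forall>k\<in>lower_cut I lt S. lt j k \<longrightarrow> j \<in> lower_cut I lt S"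
  using strict_linear_onD(2)[OF assms(1)] assms(2) unfolding lower_cut_def by blast

lemma subset_lower_cut: "S \<subseteq> I \<Longrightarrow> \<forall>i\<in>S. \<exists>s\<in>S. lt i s \<Longrightarrow> S \<subseteq> lower_cut I lt S"
  unfolding lower_cut_def by blast

lemma fs_over_lower_cut:
  assumes slo: "strict_linear_on I lt" and "elem_sub R M" and "S \<subseteq> I"
    and in_S: "\<forall>s\<in>S. fs R (A s \<union> {c}) (below I lt A s \<union> M) M"
  shows "fs R {c} (\<Union>(A ` lower_cut I lt S) \<union> M) M"
proof -
  have "\<Union>(A ` lower_cut I lt S) = \<Union>(below I lt A ` S)"
    unfolding below_def lower_cut_def by blast
  moreover have "\<forall>B\<in>below I lt A ` S. fs R {c} (B \<union> M) M"
    using in_S fs_mono[of R _ _ M "{c}"] by blast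
  ultimately show ?thesis
    using fs_Union_chain[OF \<open>elem_sub R M\<close> subset_chain_below[OF slo \<open>S \<subseteq> I\<close>]] by simp
qed

lemma below_least_outside:
  assumes slo: "strict_linear_on I lt" and "D \<subseteq> I"
    and down: "\<forall>j\<in>I. \<forall>k\<in>D. lt j k \<longrightarrow> j \<in> D"
    and "i \<in> I - D" and least: "\<forall>j\<in>I - D. \<not> lt j i"
  shows "below I lt A i = \<Union>(A ` D)"
proof -
  have "{j\<in>I. lt j i} = D"
  proof
    show "{j\<in>I. lt j i} \<subseteq> D" using least by blast
  next
    show "D \<subseteq> {j\<in>I. lt j i}"
    proof
      fix j assume "j \<in> D"
      with \<open>D \<subseteq> I\<close> \<open>i \<in> I - D\<close> down have "j \<in> I" "j \<noteq> i" "\<not> lt i j" by blast+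
      with strict_linear_onD(3)[OF slo] \<open>i \<in> I - D\<close> show "j \<in> {j\<in>I. lt j i}" by blast
    qed
  qed
  then show ?thesis unfolding below_def by simp
qed

lemma least_outside_lower_cut:
  assumes slo: "strict_linear_on I lt" and wo: "well_order_with_max I lt" and "S \<subseteq> I"
  obtains i where "i \<in> I - lower_cut I lt S" "\<forall>j\<in>I - lower_cut I lt S. \<not> lt j i"
proof -
  obtain m where "m \<in> I" and m_max: "\<forall>i\<in>I. i \<noteq> m \<longrightarrow> lt i m"
    using wo unfolding well_order_with_max_def by blast
  have "m \<notin> lower_cut I lt S"
  proof
    assume "m \<in> lower_cut I lt S"
    then obtain s where "s \<in> I" "lt m s" using \<open>S \<subseteq> I\<close> unfolding lower_cut_def by blast
    moreover from this have "lt s m"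
      using \<open>m \<in> I\<close> m_max strict_linear_onD(1)[OF slo] by metis
    ultimately show False
      using \<open>m \<in> I\<close> strict_linear_onD(1,2)[OF slo \<open>m \<in> I\<close>] by blast
  qed
  with \<open>m \<in> I\<close> have "I - lower_cut I lt S \<subseteq> I" "I - lower_cut I lt S \<noteq> {}" by blast+
  with wo that show thesis unfolding well_order_with_max_def by blast
qed

lemma fs_seq_add_at_max:
  assumes slo: "strict_linear_on I lt" and seq: "fs_seq R M I lt A" and "S \<subseteq> I"
    and in_S: "\<forall>s\<in>S. fs R (A s \<union> {c}) (below I lt A s \<union> M) M"
    and out_S: "\<forall>i\<in>I - S. fs R (A i) (below I lt A i \<union> M \<union> {c}) M"
    and "i0 \<in> S" and max: "\<forall>s\<in>S. \<not> lt i0 s"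
  shows "fs_seq R M I lt (A(i0 := A i0 \<union> {c}))"
proof (rule fs_seq_add_at[OF slo seq])
  show "i0 \<in> I" "fs R (A i0 \<union> {c}) (below I lt A i0 \<union> M) M"
    using \<open>i0 \<in> S\<close> \<open>S \<subseteq> I\<close> in_S by blast+
  show "\<forall>i\<in>I. lt i0 i \<longrightarrow> fs R (A i) (below I lt A i \<union> M \<union> {c}) M"
    using max out_S by blast
qed

lemma fs_seq_extension_new_index:
  assumes slo: "strict_linear_on I lt" and "elem_sub R M" and seq: "fs_seq R M I lt A"
    and "S \<subseteq> I"
    and in_S: "\<forall>s\<in>S. fs R (A s \<union> {c}) (below I lt A s \<union> M) M"
    and out_S: "\<forall>i\<in>I - S. fs R (A i) (below I lt A i \<union> M \<union> {c}) M"
  shows "\<exists>(J :: 'i option set) ltJ A'. strict_linear_on J ltJ \<and> Some ` I \<subseteq> J \<and>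
      (\<forall>i\<in>I. \<forall>j\<in>I. ltJ (Some i) (Some j) \<longleftrightarrow> lt i j) \<and>
      (\<forall>i\<in>I. A i \<subseteq> A' (Some i)) \<and> fs_seq R M J ltJ A' \<and> c \<in> \<Union> (A' ` J)"
proof (cases "\<exists>i0\<in>S. \<forall>s\<in>S. \<not> lt i0 s")
  case True
  then obtain i0 where "i0 \<in> S" "\<forall>s\<in>S. \<not> lt i0 s" by blast
  let ?A = "A(i0 := A i0 \<union> {c})"
  have "fs_seq R M I lt ?A"
    by (rule fs_seq_add_at_max) (fact assms \<open>i0 \<in> S\<close> \<open>\<forall>s\<in>S. \<not> lt i0 s\<close>)+
  show ?thesis
  proof (intro exI conjI)
    show "strict_linear_on (Some ` I) (\<lambda>x y. lt (the x) (the y))"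
      by (rule strict_linear_on_Some[OF slo])
    show "fs_seq R M (Some ` I) (\<lambda>x y. lt (the x) (the y)) (\<lambda>x. ?A (the x))"
      by (rule fs_seq_Some) fact
    show "c \<in> \<Union> ((\<lambda>x. ?A (the x)) ` Some ` I)"
      using \<open>i0 \<in> S\<close> \<open>S \<subseteq> I\<close> by (intro UN_I[of "Some i0"]) auto
  qed auto
next
  case False
  let ?D = "lower_cut I lt S"
  have "S \<subseteq> ?D" using False \<open>S \<subseteq> I\<close> by (intro subset_lower_cut) auto
  show ?thesis
  proof (intro exI conjI)
    show "strict_linear_on (insert None (Some ` I)) (cut_lt lt ?D)"
      using lower_cut_subset lower_cut_downward_closed[OF slo \<open>S \<subseteq> I\<close>]
      by (rule strict_linear_on_cut_lt[OF slo])
    show "fs_seq R M (insert None (Some ` I)) (cut_lt lt ?D) (case_option {c} A)"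
      by (rule fs_seq_cut[OF seq lower_cut_subset fs_over_lower_cut[OF slo assms(2,4) in_S]])
        (use out_S \<open>S \<subseteq> ?D\<close> in blast)
  qed auto
qed

lemma fs_seq_extension_same_index:
  assumes slo: "strict_linear_on I lt" and "elem_sub R M" and seq: "fs_seq R M I lt A"
    and "S \<subseteq> I"
    and in_S: "\<forall>s\<in>S. fs R (A s \<union> {c}) (below I lt A s \<union> M) M"
    and out_S: "\<forall>i\<in>I - S. fs R (A i) (below I lt A i \<union> M \<union> {c}) M"
    and wo: "well_order_with_max I lt"
  shows "\<exists>A'. (\<forall>i\<in>I. A i \<subseteq> A' i) \<and> fs_seq R M I lt A' \<and> c \<in> \<Union> (A' ` I)"
proof -
  obtain i1 where "i1 \<in> I" and at: "fs R (A i1 \<union> {c}) (below I lt A i1 \<union> M) M"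
    and above: "\<forall>i\<in>I. lt i1 i \<longrightarrow> i \<notin> S"
  proof (cases "\<exists>i0\<in>S. \<forall>s\<in>S. \<not> lt i0 s")
    case True
    with that \<open>S \<subseteq> I\<close> in_S show thesis by blast
  next
    case False
    let ?D = "lower_cut I lt S"
    have "S \<subseteq> ?D" using False \<open>S \<subseteq> I\<close> by (intro subset_lower_cut) auto
    note down = lower_cut_downward_closed[OF slo \<open>S \<subseteq> I\<close>]
    obtain i1 where i1: "i1 \<in> I - ?D" "\<forall>j\<in>I - ?D. \<not> lt j i1"
      using least_outside_lower_cut[OF slo wo \<open>S \<subseteq> I\<close>] by blast
    have "fs R (A i1 \<union> {c}) (below I lt A i1 \<union> M) M"
    proof (rule fs_Un)
      show "fs R {c} (below I lt A i1 \<union> M) M"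
        unfolding below_least_outside[OF slo lower_cut_subset down i1]
        by (rule fs_over_lower_cut[OF slo assms(2,4) in_S])
      show "fs R (A i1) (below I lt A i1 \<union> M \<union> {c}) M"
        using out_S i1(1) \<open>S \<subseteq> ?D\<close> by blast
    qed blast
    moreover have "\<forall>i\<in>I. lt i1 i \<longrightarrow> i \<notin> S"
      using down i1(1) \<open>S \<subseteq> ?D\<close> by blast
    ultimately show thesis using that i1(1) by blast
  qed
  with fs_seq_add_at[OF slo seq \<open>i1 \<in> I\<close> at] out_S
  have "fs_seq R M I lt (A(i1 := A i1 \<union> {c}))" by blast
  moreover have "\<forall>i\<in>I. A i \<subseteq> (A(i1 := A i1 \<union> {c})) i" "c \<in> \<Union> (A(i1 := A i1 \<union> {c}) ` I)"
    using \<open>i1 \<in> I\<close> by auto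
  ultimately show ?thesis by blast
qed

theorem lemma3:
  fixes Irel :: "'r \<Rightarrow> 'a list set" and K :: "'k set" and M :: "'a set"
    and I :: "'i set" and lt :: "'i \<Rightarrow> 'i \<Rightarrow> bool" and A :: "'i \<Rightarrow> 'a set" and c :: 'a
  assumes "monster Irel K"
    and "fs_dichotomy Irel K"
    and "elem_sub Irel M" and "small K M"
    and "strict_linear_on I lt"
    and "fs_seq Irel M I lt A"
  shows "(\<exists>(J :: 'i option set) ltJ A'.
            strict_linear_on J ltJ \<and> Some ` I \<subseteq> J \<and>
            (\<forall>i\<in>I. \<forall>j\<in>I. ltJ (Some i) (Some j) \<longleftrightarrow> lt i j) \<and>
            (\<forall>i\<in>I. A i \<subseteq> A' (Some i)) \<and>
            fs_seq Irel M J ltJ A' \<and> c \<in> \<Union> (A' ` J))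
       \<and> (well_order_with_max I lt \<longrightarrow>
            (\<exists>A'. (\<forall>i\<in>I. A i \<subseteq> A' i) \<and> fs_seq Irel M I lt A' \<and> c \<in> \<Union> (A' ` I)))"
proof -
  define S where "S = {i\<in>I. \<not> fs Irel (A i) (below I lt A i \<union> M \<union> {c}) M}"
  have "S \<subseteq> I" by (simp add: S_def)
  have in_S: "\<forall>s\<in>S. fs Irel (A s \<union> {c}) (below I lt A s \<union> M) M"
    using fs_dichotomy_sets[OF assms(2-4)] fs_seqD[OF assms(6)] unfolding S_def by blast
  have out_S: "\<forall>i\<in>I - S. fs Irel (A i) (below I lt A i \<union> M \<union> {c}) M"
    unfolding S_def by blast
  show ?thesis
    using fs_seq_extension_new_index[OF assms(5,3,6) \<open>S \<subseteq> I\<close> in_S out_S]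
      fs_seq_extension_same_index[OF assms(5,3,6) \<open>S \<subseteq> I\<close> in_S out_S] by blast
qed

end
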